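(* Let $n\ge 2$ and let $S=\{s_1<\dots<s_{k_1}\}$ and $T=\{t_1<\dots<t_{k_2}\}$ be nonempty subsets of $\{1,\dots,n-1\}$ with $\max S+\min T\le n$ and $\min S+\max T\le n$. Let $D$ be the digraph of the Boolean Toeplitz matrix $T_n\langle S;T\rangle$, let $d=\gcd\{s+t : s\in S,\ t\in T\}$ and $d'=\gcd(d,s_1)$. Then (a) the matrix period of $D$ is $d/d'$; (b) the competition period of $D$ is $1$; (c) there is $M$ such that for every $m\ge M$, the $m$-step competition graph $C^m(D)$ is the disjoint union of the cliques $\{v\in[n] : v\equiv i \pmod d\}$, $1\le i\le d$ (i.e. the limit of $\{C^m(D)\}_{m\ge1}$ is this disjoint union of cliques).
   Context: Boolean arithmetic on $\{0,1\}$: $1+1=1$, usual multiplication. For nonempty $S,T\subseteq\{1,\dots,n-1\}$, $T_n\langle S;T\rangle$ is the $n\times n$ $(0,1)$-matrix whose $(i,j)$-entry is $1$ iff $j-i\in S$ or $i-j\in T$. Its digraph $D$ has vertex set $[n]=\{1,\dots,n\}$ and an arc $(i,j)$ iff the $(i,j)$-entry is $1$. The matrix period of $D$ (of its adjacency matrix $A$) is the smallest $p\ge1$ such that $A^m=A^{m+p}$ for all sufficiently large $m$ (Boolean powers). The $m$-step competition graph $C^m(D)$ is the graph on $[n]$ in which distinct $u,v$ are adjacent iff some vertex $w$ is reachable from both $u$ and $v$ by directed walks of length exactly $m$; equivalently the off-diagonal $(u,v)$-entry of $A^m(A^T)^m$ is $1$. The competition index $q$ and competition period $p$ of $A$: $q$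 is the smallest positive integer such that $A^{q+i}(A^T)^{q+i}=A^{q+r+i}(A^T)^{q+r+i}$ for some $r\ge1$ and all $i\ge0$, and $p$ is the smallest positive integer with $A^q(A^T)^q=A^{q+p}(A^T)^{q+p}$. *)

theory Defs
  imports Main
begin

text \<open>Boolean (0,1)-matrices of order n are represented as predicates
  nat \<Rightarrow> nat \<Rightarrow> bool on the index set {1..n}; entries outside {1..n} are False.\<close>

definition toeplitz :: "nat \<Rightarrow> nat set \<Rightarrow> nat set \<Rightarrow> nat \<Rightarrow> nat \<Rightarrow> bool" where
  "toeplitz n S T i j \<longleftrightarrow> i \<in> {1..n} \<and> j \<in> {1..n} \<and>
     ((i < j \<and> j - i \<in> S) \<or> (j < i \<and> i - j \<in> T))"

definition bmult :: "nat \<Rightarrow> (nat \<Rightarrow> nat \<Rightarrow> bool) \<Rightarrow> (nat \<Rightarrow> nat \<Rightarrow> bool) \<Rightarrow> nat \<Rightarrow> nat \<Rightarrow> bool" where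
  "bmult n A B i j \<longleftrightarrow> (\<exists>k\<in>{1..n}. A i k \<and> B k j)"

definition btrans :: "(nat \<Rightarrow> nat \<Rightarrow> bool) \<Rightarrow> nat \<Rightarrow> nat \<Rightarrow> bool" where
  "btrans A i j \<longleftrightarrow> A j i"

primrec bpow :: "nat \<Rightarrow> (nat \<Rightarrow> nat \<Rightarrow> bool) \<Rightarrow> nat \<Rightarrow> nat \<Rightarrow> nat \<Rightarrow> bool" where
  "bpow n A 0 = (\<lambda>i j. i \<in> {1..n} \<and> i = j)"
| "bpow n A (Suc m) = bmult n (bpow n A m) A"

definition matrix_period :: "nat \<Rightarrow> (nat \<Rightarrow> nat \<Rightarrow> bool) \<Rightarrow> nat" where
  "matrix_period n A = (LEAST p. p \<ge> 1 \<and> (\<exists>M. \<forall>m\<ge>M. bpow n A m = bpow n A (m + p)))"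

definition comp_mat :: "nat \<Rightarrow> (nat \<Rightarrow> nat \<Rightarrow> bool) \<Rightarrow> nat \<Rightarrow> nat \<Rightarrow> nat \<Rightarrow> bool" where
  "comp_mat n A m = bmult n (bpow n A m) (bpow n (btrans A) m)"

definition competition_index :: "nat \<Rightarrow> (nat \<Rightarrow> nat \<Rightarrow> bool) \<Rightarrow> nat" where
  "competition_index n A = (LEAST q. q \<ge> 1 \<and>
     (\<exists>r\<ge>1. \<forall>i. comp_mat n A (q + i) = comp_mat n A (q + r + i)))"

definition competition_period :: "nat \<Rightarrow> (nat \<Rightarrow> nat \<Rightarrow> bool) \<Rightarrow> nat" where
  "competition_period n A = (let q = competition_index n A in
     (LEAST p. p \<ge> 1 \<and> comp_mat n A q = comp_mat n A (q + p)))"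

definition mstep_comp_graph :: "nat \<Rightarrow> (nat \<Rightarrow> nat \<Rightarrow> bool) \<Rightarrow> nat \<Rightarrow> nat \<Rightarrow> nat \<Rightarrow> bool" where
  "mstep_comp_graph n A m u v \<longleftrightarrow> u \<in> {1..n} \<and> v \<in> {1..n} \<and> u \<noteq> v \<and>
     (\<exists>w\<in>{1..n}. bpow n A m u w \<and> bpow n A m v w)"

end

theory Submission
  imports Defs
begin

text \<open>Let \<open>a = Min S\<close>, \<open>b = Min T\<close> and \<open>d = Gcd {s + t}\<close>. Every arc moves by some \<open>s\<close> or by
  some \<open>-t\<close>, and \<open>s \<equiv> a \<equiv> -t (mod d)\<close>, so a walk of length \<open>m\<close> from \<open>u\<close> to \<open>v\<close> forces
  \<open>v \<equiv> u + m a (mod d)\<close>. Conversely, on the home vertices \<open>{1..a+b}\<close> the walk that steps up by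
  \<open>a\<close> when it can and down by \<open>b\<close> otherwise is the rotation by \<open>a\<close> modulo \<open>a + b\<close>. Detours
  through an arc \<open>s\<close> or \<open>-t\<close> shift this rotation by \<open>s - a\<close> or \<open>b - t\<close>, and the realisable shifts
  form an ideal of \<open>\<int>\<close> containing every \<open>s + t\<close>, hence \<open>d\<close>. So for large \<open>m\<close> the entry \<open>(u, v)\<close>
  of \<open>A\<^sup>m\<close> is \<open>1\<close> exactly when \<open>v \<equiv> u + m a (mod d)\<close>. Then \<open>A\<^sup>m = A\<^sup>m\<^sup>+\<^sup>p\<close> iff
  \<open>d dvd p a\<close> iff \<open>d div gcd d a dvd p\<close>, while \<open>A\<^sup>m (A\<^sup>T)\<^sup>m\<close> is eventually the constant relation
  \<open>u \<equiv> v (mod d)\<close>.\<close>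

section \<open>Boolean matrix powers\<close>

lemma bpow_support:
  assumes "\<And>i j. A i j \<Longrightarrow> i \<in> {1..n} \<and> j \<in> {1..n}" and "bpow n A m i j"
  shows "i \<in> {1..n} \<and> j \<in> {1..n}"
  using assms(2) by (induction m arbitrary: j) (use assms(1) in \<open>auto simp: bmult_def\<close>)

lemma bpow_add:
  assumes supp: "\<And>i j. A i j \<Longrightarrow> i \<in> {1..n} \<and> j \<in> {1..n}"
  shows "bpow n A (p + q) u w \<longleftrightarrow> (\<exists>v\<in>{1..n}. bpow n A p u v \<and> bpow n A q v w)"
proof (induction q arbitrary: w)
  case 0
  then show ?case using bpow_support[OF supp] by auto
next
  case (Suc q)
  have "bpow n A (p + Suc q) u w \<longleftrightarrow> (\<exists>k\<in>{1..n}. bpow n A (p + q) u k \<and> A k w)"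
    by (simp add: bmult_def)
  also have "\<dots> \<longleftrightarrow> (\<exists>v\<in>{1..n}. bpow n A p u v \<and> bpow n A (Suc q) v w)"
    using Suc by (auto simp: bmult_def)
  finally show ?case .
qed

lemma bpow_btrans:
  assumes supp: "\<And>i j. A i j \<Longrightarrow> i \<in> {1..n} \<and> j \<in> {1..n}"
  shows "bpow n (btrans A) m i j \<longleftrightarrow> bpow n A m j i"
proof (induction m arbitrary: j)
  case 0
  then show ?case by auto
next
  case (Suc m)
  have "bpow n (btrans A) (Suc m) i j \<longleftrightarrow> (\<exists>k\<in>{1..n}. bpow n A 1 j k \<and> bpow n A m k i)"
    using Suc.IH supp by (auto simp: bmult_def btrans_def[abs_def])
  also have "\<dots> \<longleftrightarrow> bpow n A (1 + m) j i"
    using bpow_add[OF supp] by blast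
  finally show ?case by simp
qed

lemma comp_mat_iff:
  assumes "\<And>i j. A i j \<Longrightarrow> i \<in> {1..n} \<and> j \<in> {1..n}"
  shows "comp_mat n A m u v \<longleftrightarrow> (\<exists>w\<in>{1..n}. bpow n A m u w \<and> bpow n A m v w)"
  using bpow_btrans[OF assms] by (simp add: comp_mat_def bmult_def)

lemma matrix_period_eqI:
  assumes "p \<ge> 1" and "\<And>m q. m \<ge> M \<Longrightarrow> bpow n A m = bpow n A (m + q) \<longleftrightarrow> p dvd q"
  shows "matrix_period n A = p"
  unfolding matrix_period_def
proof (rule Least_equality)
  show "p \<ge> 1 \<and> (\<exists>M. \<forall>m\<ge>M. bpow n A m = bpow n A (m + p))"
  proof (intro conjI exI allI impI)
    fix m assume "m \<ge> M"
    then show "bpow n A m = bpow n A (m + p)"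
      using assms(2) by simp
  qed (use assms(1) in simp)
next
  fix q
  assume "q \<ge> 1 \<and> (\<exists>M. \<forall>m\<ge>M. bpow n A m = bpow n A (m + q))"
  then obtain M' where "q \<ge> 1" and M': "\<And>m. m \<ge> M' \<Longrightarrow> bpow n A m = bpow n A (m + q)"
    by blast
  have "bpow n A (max M M') = bpow n A (max M M' + q)"
    by (rule M') simp
  then have "p dvd q"
    using assms(2)[of "max M M'" q] by simp
  then show "p \<le> q"
    using \<open>q \<ge> 1\<close> by (simp add: dvd_imp_le)
qed

lemma competition_period_eq_1I:
  assumes "\<And>m. m \<ge> M \<Longrightarrow> comp_mat n A m = C"
  shows "competition_period n A = 1"
proof -
  let ?is_index = "\<lambda>q. q \<ge> 1 \<and> (\<exists>r\<ge>1. \<forall>i. comp_mat n A (q + i) = comp_mat n A (q + r + i))"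
  define q where "q = competition_index n A"
  have "?is_index (M + 1)"
    using assms by (intro conjI exI[of _ 1]) auto
  then have "?is_index q"
    unfolding q_def competition_index_def by (rule LeastI)
  then obtain r where "r \<ge> 1" and r: "\<And>i. comp_mat n A (q + i) = comp_mat n A (q + r + i)"
    by blast
  have iterate: "comp_mat n A (q + i) = comp_mat n A (q + k * r + i)" for k i
  proof (induction k arbitrary: i)
    case 0
    then show ?case by simp
  next
    case (Suc k)
    have "q + Suc k * r + i = q + r + (k * r + i)"
      by simp
    then show ?case
      using Suc.IH r[of "k * r + i"] by (simp add: add.assoc)
  qed
  have "M \<le> q + M * r"
    using \<open>r \<ge> 1\<close> by (simp add: trans_le_add2)
  then have "comp_mat n A q = comp_mat n A (q + 1)"
    using iterate[of 0 M] iterate[of 1 M] assms by simp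
  then show ?thesis
    unfolding competition_period_def Let_def q_def[symmetric]
    by (intro Least_equality) auto
qed

lemma dvd_mult_iff_div_gcd_dvd:
  fixes d a p :: nat
  assumes "d > 0"
  shows "d dvd p * a \<longleftrightarrow> d div gcd d a dvd p"
  using assms by (simp add: div_dvd_iff_mult gcd_mult_distrib_nat)

lemma Gcd_in_int_ideal:
  fixes I :: "int set" and X :: "nat set"
  assumes "0 \<in> I" and add: "\<And>x y. x \<in> I \<Longrightarrow> y \<in> I \<Longrightarrow> x + y \<in> I"
    and mult: "\<And>z x. x \<in> I \<Longrightarrow> z * x \<in> I"
    and "finite X" and "\<And>x. x \<in> X \<Longrightarrow> int x \<in> I"
  shows "int (Gcd X) \<in> I"
  using assms(4,5)
proof (induction X rule: finite_induct)
  case empty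
  then show ?case using \<open>0 \<in> I\<close> by simp
next
  case (insert x X)
  obtain u v where "u * int x + v * int (Gcd X) = gcd (int x) (int (Gcd X))"
    using bezout_int by blast
  then have "int (Gcd (insert x X)) = u * int x + v * int (Gcd X)"
    by simp
  then show ?case
    using insert add mult by simp
qed

lemma eq_if_int_dvd_diff:
  assumes "x \<in> {1..c}" "y \<in> {1..c}" "int c dvd int y - int x"
  shows "x = y"
proof (rule ccontr)
  assume "x \<noteq> y"
  then have "\<bar>int c\<bar> \<le> \<bar>int y - int x\<bar>"
    using assms(3) by (intro dvd_imp_le_int) auto
  then show False
    using assms(1,2) by auto
qed

lemma pos_residue_decomp:
  fixes c u :: nat
  assumes "0 < c" "1 \<le> u"
  obtains x j where "x \<in> {1..c}" "u = x + j * c"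
proof (rule that)
  show "(u - 1) mod c + 1 \<in> {1..c}"
    using assms by (simp add: Suc_leI)
  show "u = ((u - 1) mod c + 1) + (u - 1) div c * c"
    using div_mult_mod_eq[of "u - 1" c] assms by linarith
qed

lemma ex_residue_rep:
  fixes c :: int and d :: nat
  assumes "d > 0"
  shows "\<exists>w\<in>{1..d}. int d dvd int w - c"
proof
  define w where "w = nat ((c - 1) mod int d) + 1"
  have "0 \<le> (c - 1) mod int d" "(c - 1) mod int d < int d"
    using assms by simp_all
  then have w: "int w = (c - 1) mod int d + 1" "w \<in> {1..d}"
    unfolding w_def by auto
  show "w \<in> {1..d}"
    using w(2) .
  have "int d dvd (c - 1) mod int d - (c - 1)"
    by (simp add: mod_eq_dvd_iff[symmetric])
  then show "int d dvd int w - c"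
    using w(1) by (simp add: algebra_simps)
qed

section \<open>Walks in the Toeplitz digraph\<close>

locale toeplitz_digraph =
  fixes n :: nat and S T :: "nat set"
  assumes S_nonempty: "S \<noteq> {}" and T_nonempty: "T \<noteq> {}"
    and S_subset: "S \<subseteq> {1..n-1}" and T_subset: "T \<subseteq> {1..n-1}"
    and Max_S_Min_T: "Max S + Min T \<le> n" and Min_S_Max_T: "Min S + Max T \<le> n"
begin

abbreviation "A \<equiv> toeplitz n S T"
abbreviation "a \<equiv> Min S"
abbreviation "b \<equiv> Min T"
abbreviation "d \<equiv> Gcd {s + t | s t. s \<in> S \<and> t \<in> T}"

lemma finite_S: "finite S"
  using S_subset finite_subset by blast

lemma finite_T: "finite T"
  using T_subset finite_subset by blast

lemma a_in_S: "a \<in> S"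
  using finite_S S_nonempty by simp

lemma b_in_T: "b \<in> T"
  using finite_T T_nonempty by simp

lemma S_pos: "s \<in> S \<Longrightarrow> 1 \<le> s"
  using S_subset by auto

lemma T_pos: "t \<in> T \<Longrightarrow> 1 \<le> t"
  using T_subset by auto

lemma a_pos: "1 \<le> a"
  using S_pos a_in_S by blast

lemma b_pos: "1 \<le> b"
  using T_pos b_in_T by blast

lemma S_plus_b_le: "s \<in> S \<Longrightarrow> s + b \<le> n"
  using Max_S_Min_T Max_ge[OF finite_S, of s] by linarith

lemma a_plus_T_le: "t \<in> T \<Longrightarrow> a + t \<le> n"
  using Min_S_Max_T Max_ge[OF finite_T, of t] by linarith

lemma a_plus_b_le: "a + b \<le> n"
  using S_plus_b_le a_in_S by blast

lemma toeplitz_support: "A i j \<Longrightarrow> i \<in> {1..n} \<and> j \<in> {1..n}"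
  by (simp add: toeplitz_def)

lemma toeplitz_up: "1 \<le> p \<Longrightarrow> s \<in> S \<Longrightarrow> p + s \<le> n \<Longrightarrow> A p (p + s)"
  using S_pos[of s] by (auto simp: toeplitz_def)

lemma toeplitz_down: "p \<le> n \<Longrightarrow> t \<in> T \<Longrightarrow> t < p \<Longrightarrow> A p (p - t)"
  using T_pos[of t] by (auto simp: toeplitz_def)

lemma bpow_snoc: "bpow n A k x y \<Longrightarrow> A y z \<Longrightarrow> bpow n A (Suc k) x z"
  using toeplitz_support by (auto simp: bmult_def)

lemma bpow_append: "bpow n A k x y \<Longrightarrow> bpow n A l y z \<Longrightarrow> bpow n A (k + l) x z"
  using bpow_add[of A n k l x z] toeplitz_support bpow_support[OF toeplitz_support] by blast

lemma bpow_descend: "t \<in> T \<Longrightarrow> p \<le> n \<Longrightarrow> j * t < p \<Longrightarrow> bpow n A j p (p - j * t)"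
proof (induction j)
  case 0
  then show ?case by simp
next
  case (Suc j)
  then have "A (p - j * t) (p - j * t - t)"
    by (intro toeplitz_down) auto
  then show ?case
    using Suc bpow_snoc by (simp add: diff_diff_add add.commute)
qed

lemma bpow_ascend: "s \<in> S \<Longrightarrow> 1 \<le> p \<Longrightarrow> p + j * s \<le> n \<Longrightarrow> bpow n A j p (p + j * s)"
proof (induction j)
  case 0
  then show ?case using S_pos[of s] by simp
next
  case (Suc j)
  then have "A (p + j * s) (p + j * s + s)"
    by (intro toeplitz_up) auto
  then show ?case
    using Suc bpow_snoc by (simp add: add.commute add.left_commute)
qed

lemma d_dvd_sum: "s \<in> S \<Longrightarrow> t \<in> T \<Longrightarrow> d dvd s + t"
  by (intro Gcd_dvd) blast

lemma int_d_dvd_sum: "s \<in> S \<Longrightarrow> t \<in> T \<Longrightarrow> int d dvd int s + int t"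
  using d_dvd_sum[of s t] of_nat_dvd_iff[of d "s + t", where 'a=int] by simp

lemma d_dvd_a_plus_b: "d dvd a + b"
  by (rule d_dvd_sum[OF a_in_S b_in_T])

lemma int_d_dvd_a_plus_b: "int d dvd int (a + b)"
  using d_dvd_a_plus_b by (simp only: of_nat_dvd_iff)

lemma d_pos: "0 < d"
proof (rule gr0I)
  assume "d = 0"
  with d_dvd_a_plus_b have "a + b = 0"
    by (simp only: dvd_0_left_iff)
  with a_pos show False
    by simp
qed

lemma d_le_n: "d \<le> n"
  using dvd_imp_le[OF d_dvd_a_plus_b] a_pos a_plus_b_le by linarith

text \<open>\<open>s \<equiv> a \<equiv> -t (mod d)\<close> because \<open>s + b\<close>, \<open>a + b\<close> and \<open>a + t\<close> are multiples of \<open>d\<close>.\<close>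

lemma toeplitz_step_dvd: "A u v \<Longrightarrow> int d dvd int v - int u - int a"
  unfolding toeplitz_def
proof (elim conjE disjE)
  assume "u < v" "v - u \<in> S"
  then have "int d dvd (int (v - u) + int b) - (int a + int b)"
    by (intro dvd_diff int_d_dvd_sum a_in_S b_in_T \<open>v - u \<in> S\<close>)
  then show ?thesis
    using \<open>u < v\<close> by (simp add: of_nat_diff)
next
  assume "v < u" "u - v \<in> T"
  then have "int d dvd - (int a + int (u - v))"
    using int_d_dvd_sum a_in_S by (simp only: dvd_minus_iff)
  then show ?thesis
    using \<open>v < u\<close> by (simp add: of_nat_diff algebra_simps)
qed

lemma bpow_dvd: "bpow n A m u v \<Longrightarrow> int d dvd int v - int u - int m * int a"
proof (induction m arbitrary: v)
  case 0
  then show ?case by simp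
next
  case (Suc m)
  then obtain k where "bpow n A m u k" "A k v"
    by (auto simp: bmult_def)
  then have "int d dvd (int k - int u - int m * int a) + (int v - int k - int a)"
    using Suc.IH toeplitz_step_dvd by (intro dvd_add) auto
  then show ?case
    by (simp add: algebra_simps)
qed

lemma bpow_descend_to_base:
  assumes "u \<in> {1..n}"
  obtains p j where "p \<in> {1..b}" "u = p + j * b" "bpow n A j u p"
proof -
  obtain p j where p: "p \<in> {1..b}" "u = p + j * b"
    using pos_residue_decomp[of b u] b_pos assms by auto
  moreover have "bpow n A j u p"
    using bpow_descend[OF b_in_T, of u j] p assms by simp
  ultimately show thesis
    using that by blast
qed

lemma bpow_ascend_to_top:
  assumes "u \<in> {1..n}"
  obtains j where "u + j * a \<le> n" "n < u + j * a + a" "bpow n A j u (u + j * a)"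
proof -
  define j where "j = (n - u) div a"
  have "(n - u) mod a < a" "u \<le> n"
    using a_pos assms by simp_all
  then have "u + j * a \<le> n" "n < u + j * a + a"
    using div_mult_mod_eq[of "n - u" a] unfolding j_def by linarith+
  with bpow_ascend[OF a_in_S, of u j] assms show thesis
    using that by simp
qed

lemma bpow_rotation:
  assumes "p \<in> {1..a+b}"
  shows "\<exists>q\<in>{1..a+b}. bpow n A k p q \<and> int (a+b) dvd int q - int p - int k * int a"
proof (induction k)
  case 0
  then show ?case
    using assms a_plus_b_le by auto
next
  case (Suc k)
  then obtain q where q: "q \<in> {1..a+b}" "bpow n A k p q"
    and dvd: "int (a+b) dvd int q - int p - int k * int a"
    by blast
  show ?case
  proof (cases "q \<le> b")
    case True
    then have "A q (q + a)"
      using q a_in_S a_plus_b_le by (intro toeplitz_up) auto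
    moreover have "int (q + a) - int p - int (Suc k) * int a = int q - int p - int k * int a"
      by (simp add: algebra_simps)
    then have "int (a+b) dvd int (q + a) - int p - int (Suc k) * int a"
      using dvd by (simp only:)
    ultimately show ?thesis
      using True q a_pos bpow_snoc by (intro bexI[of _ "q + a"]) auto
  next
    case False
    then have "A q (q - b)"
      using q b_in_T a_plus_b_le by (intro toeplitz_down) auto
    moreover have "int (q - b) - int p - int (Suc k) * int a
        = (int q - int p - int k * int a) - int (a + b)"
      using False by (simp add: of_nat_diff algebra_simps)
    then have "int (a+b) dvd int (q - b) - int p - int (Suc k) * int a"
      using dvd by (simp only: dvd_diff_right_iff dvd_refl)
    ultimately show ?thesis
      using False q bpow_snoc by (intro bexI[of _ "q - b"]) auto
  qed
qed

lemma bpow_rotation_exact: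
  assumes "x \<in> {1..a+b}" "y \<in> {1..a+b}" "int (a+b) dvd int y - int x - int k * int a"
  shows "bpow n A k x y"
proof -
  obtain q where q: "q \<in> {1..a+b}" "bpow n A k x q"
    "int (a+b) dvd int q - int x - int k * int a"
    using bpow_rotation[OF assms(1)] by blast
  have "int (a+b) dvd (int q - int x - int k * int a) - (int y - int x - int k * int a)"
    using q(3) assms(3) by (rule dvd_diff)
  then have "y = q"
    using eq_if_int_dvd_diff[OF assms(2) q(1)] by simp
  then show ?thesis
    using q by simp
qed

text \<open>A drift is a displacement that walks can add, from every home vertex, to the rotation
  by \<open>a\<close>.\<close>

definition drifts :: "int set" where
  "drifts = {r. \<forall>x\<in>{1..a+b}. \<exists>p\<in>{1..a+b}. \<exists>l.
     bpow n A l x p \<and> int (a+b) dvd int p - int x - int l * int a - r}"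

lemma multiple_in_drifts: "int (a+b) * z \<in> drifts"
  unfolding drifts_def using a_plus_b_le by (auto intro!: exI[of _ 0])

lemma drifts_add:
  assumes "r1 \<in> drifts" "r2 \<in> drifts"
  shows "r1 + r2 \<in> drifts"
  unfolding drifts_def
proof (intro CollectI ballI)
  fix x
  assume "x \<in> {1..a+b}"
  then obtain p1 l1 where p1: "p1 \<in> {1..a+b}" "bpow n A l1 x p1"
    "int (a+b) dvd int p1 - int x - int l1 * int a - r1"
    using assms(1) unfolding drifts_def by blast
  then obtain p2 l2 where p2: "p2 \<in> {1..a+b}" "bpow n A l2 p1 p2"
    "int (a+b) dvd int p2 - int p1 - int l2 * int a - r2"
    using assms(2) unfolding drifts_def by blast
  have "int (a+b) dvd (int p1 - int x - int l1 * int a - r1) + (int p2 - int p1 - int l2 * int a - r2)"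
    using p1(3) p2(3) by (rule dvd_add)
  then have "int (a+b) dvd int p2 - int x - int (l1 + l2) * int a - (r1 + r2)"
    by (simp add: algebra_simps)
  then show "\<exists>p\<in>{1..a+b}. \<exists>l. bpow n A l x p \<and> int (a+b) dvd int p - int x - int l * int a - (r1 + r2)"
    using p2(1) bpow_append[OF p1(2) p2(2)] by blast
qed

lemma drifts_nat_mult: "r \<in> drifts \<Longrightarrow> int k * r \<in> drifts"
  by (induction k) (use multiple_in_drifts[of 0] drifts_add in \<open>auto simp: algebra_simps\<close>)

text \<open>Negation comes for free because drifts only matter modulo \<open>a + b\<close>.\<close>

lemma drifts_uminus:
  assumes "r \<in> drifts"
  shows "- r \<in> drifts"
proof -
  have "int (a + b - 1) * r + int (a+b) * (- r) \<in> drifts"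
    using drifts_nat_mult[OF assms] multiple_in_drifts by (rule drifts_add)
  moreover have "int (a + b - 1) * r + int (a+b) * (- r) = - r"
    using a_pos by (simp add: of_nat_diff algebra_simps)
  ultimately show ?thesis
    by simp
qed

lemma drifts_mult:
  assumes "r \<in> drifts"
  shows "z * r \<in> drifts"
proof (cases z rule: int_cases)
  case (nonneg k)
  then show ?thesis
    using drifts_nat_mult[OF assms] by simp
next
  case (neg k)
  then have "z * r = - (int (Suc k) * r)"
    by (simp add: ring_distribs)
  then show ?thesis
    using drifts_uminus[OF drifts_nat_mult[OF assms, of "Suc k"]] by (simp only:)
qed

lemma S_drift:
  assumes "s \<in> S"
  shows "int s - int a \<in> drifts"
  unfolding drifts_def
proof (intro CollectI ballI)
  fix x
  assume "x \<in> {1..a+b}"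
  then have "x \<in> {1..n}"
    using a_plus_b_le by auto
  then obtain p j where p: "p \<in> {1..b}" "x = p + j * b" "bpow n A j x p"
    by (rule bpow_descend_to_base)
  have "A p (p + s)"
    using p(1) S_plus_b_le[OF assms] by (intro toeplitz_up assms) auto
  moreover have "p + s \<in> {1..n}"
    using p(1) S_plus_b_le[OF assms] by auto
  then obtain p' j' where p': "p' \<in> {1..b}" "p + s = p' + j' * b" "bpow n A j' (p + s) p'"
    by (rule bpow_descend_to_base)
  ultimately have walk: "bpow n A (Suc j + j') x p'"
    using p(3) bpow_snoc bpow_append by blast
  have "int x = int p + int j * int b" "int p + int s = int p' + int j' * int b"
    using arg_cong[OF p(2), of int] arg_cong[OF p'(2), of int] by simp_all
  then have "int p' - int x - int (Suc j + j') * int a - (int s - int a) = int (a+b) * - int (j + j')"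
    by (simp add: algebra_simps)
  then show "\<exists>p\<in>{1..a+b}. \<exists>l. bpow n A l x p \<and> int (a+b) dvd int p - int x - int l * int a - (int s - int a)"
    using walk p'(1) by (intro bexI[of _ p'] exI[of _ "Suc j + j'"]) auto
qed

lemma T_drift:
  assumes "t \<in> T"
  shows "int b - int t \<in> drifts"
  unfolding drifts_def
proof (intro CollectI ballI)
  fix x
  assume "x \<in> {1..a+b}"
  then have "x \<in> {1..n}"
    using a_plus_b_le by auto
  then obtain j where j: "x + j * a \<le> n" "n < x + j * a + a" "bpow n A j x (x + j * a)"
    by (rule bpow_ascend_to_top)
  then have "t < x + j * a"
    using a_plus_T_le[OF assms] by linarith
  then have "A (x + j * a) (x + j * a - t)"
    using j(1) by (intro toeplitz_down assms)
  moreover have "x + j * a - t \<in> {1..n}"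
    using \<open>t < x + j * a\<close> j(1) by auto
  then obtain p' j' where p': "p' \<in> {1..b}" "x + j * a - t = p' + j' * b"
    "bpow n A j' (x + j * a - t) p'"
    by (rule bpow_descend_to_base)
  ultimately have walk: "bpow n A (Suc j + j') x p'"
    using j(3) bpow_snoc bpow_append by blast
  have "int x + int j * int a - int t = int p' + int j' * int b"
    using arg_cong[OF p'(2), of int] \<open>t < x + j * a\<close> by (simp add: of_nat_diff)
  then have "int p' - int x - int (Suc j + j') * int a - (int b - int t) = int (a+b) * - int (1 + j')"
    by (simp add: algebra_simps)
  then show "\<exists>p\<in>{1..a+b}. \<exists>l. bpow n A l x p \<and> int (a+b) dvd int p - int x - int l * int a - (int b - int t)"
    using walk p'(1) by (intro bexI[of _ p'] exI[of _ "Suc j + j'"]) auto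
qed

lemma sum_drift: "s \<in> S \<Longrightarrow> t \<in> T \<Longrightarrow> int s + int t \<in> drifts"
  using drifts_add[OF drifts_add[OF S_drift drifts_uminus[OF T_drift]] multiple_in_drifts[of 1]]
  by simp

lemma dvd_imp_drift: "int d dvd r \<Longrightarrow> r \<in> drifts"
proof -
  have "int d \<in> drifts"
  proof (rule Gcd_in_int_ideal)
    show "finite {s + t | s t. s \<in> S \<and> t \<in> T}"
      using finite_S finite_T by (intro finite_image_set2) simp_all
  qed (use multiple_in_drifts[of 0] drifts_add drifts_mult sum_drift in auto)
  then show "int d dvd r \<Longrightarrow> r \<in> drifts"
    using drifts_mult by (auto elim!: dvdE simp: mult.commute)
qed

section \<open>Large powers\<close>

lemma bpow_home_drift_eventually:
  assumes "x \<in> {1..a+b}" "y \<in> {1..a+b}" "r \<in> drifts"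
  shows "\<forall>\<^sub>F m in sequentially.
    int (a+b) dvd int y - int x - int m * int a - r \<longrightarrow> bpow n A m x y"
proof -
  obtain p l where p: "p \<in> {1..a+b}" "bpow n A l x p"
    "int (a+b) dvd int p - int x - int l * int a - r"
    using assms(1,3) unfolding drifts_def by blast
  have "bpow n A m x y"
    if "m \<ge> l" and "int (a+b) dvd int y - int x - int m * int a - r" for m
  proof -
    have "int (a+b) dvd (int y - int x - int m * int a - r) - (int p - int x - int l * int a - r)"
      using that(2) p(3) by (rule dvd_diff)
    also have "\<dots> = int y - int p - int (m - l) * int a"
      using that(1) by (simp add: of_nat_diff algebra_simps)
    finally have "bpow n A (m - l) p y"
      by (rule bpow_rotation_exact[OF p(1) assms(2)])
    then show ?thesis
      using bpow_append[OF p(2)] that(1) by fastforce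
  qed
  then show ?thesis
    unfolding eventually_sequentially by blast
qed

lemma bpow_home_eventually:
  assumes "x \<in> {1..a+b}" "y \<in> {1..a+b}"
  shows "\<forall>\<^sub>F m in sequentially. int d dvd int y - int x - int m * int a \<longrightarrow> bpow n A m x y"
proof -
  let ?N = "int (a+b)"
  have "finite {r\<in>{0..<?N}. int d dvd r}"
    by (rule finite_subset[of _ "{0..<?N}"]) auto
  then have "\<forall>\<^sub>F m in sequentially. \<forall>r\<in>{r\<in>{0..<?N}. int d dvd r}.
      ?N dvd int y - int x - int m * int a - r \<longrightarrow> bpow n A m x y"
    by (intro eventually_ball_finite ballI bpow_home_drift_eventually assms dvd_imp_drift) auto
  then show ?thesis
  proof (rule eventually_mono, intro impI)
    fix m
    let ?r = "(int y - int x - int m * int a) mod ?N"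
    assume all: "\<forall>r\<in>{r\<in>{0..<?N}. int d dvd r}.
        ?N dvd int y - int x - int m * int a - r \<longrightarrow> bpow n A m x y"
      and "int d dvd int y - int x - int m * int a"
    then have "int d dvd ?r"
      by (intro dvd_mod int_d_dvd_a_plus_b)
    moreover have "?r \<in> {0..<?N}"
      using a_pos by simp
    ultimately show "bpow n A m x y"
      using all dvd_minus_mod by blast
  qed
qed

lemma bpow_eventually:
  assumes "u \<in> {1..n}" "v \<in> {1..n}"
  shows "\<forall>\<^sub>F m in sequentially. int d dvd int v - int u - int m * int a \<longrightarrow> bpow n A m u v"
proof -
  obtain x j where x: "x \<in> {1..b}" "u = x + j * b" "bpow n A j u x"
    using assms(1) by (rule bpow_descend_to_base)
  obtain y k where y: "y \<in> {1..a}" "v = y + k * a"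
    using pos_residue_decomp[of a v] a_pos assms(2) by auto
  have up: "bpow n A k y v"
    using bpow_ascend[OF a_in_S, of y k] y assms(2) by simp
  have "\<forall>\<^sub>F m in sequentially. int d dvd int y - int x - int m * int a \<longrightarrow> bpow n A m x y"
    using x(1) y(1) by (intro bpow_home_eventually) auto
  then have "\<forall>\<^sub>F m in sequentially.
      int d dvd int v - int u - int (m + (j + k)) * int a \<longrightarrow> bpow n A (m + (j + k)) u v"
  proof (rule eventually_mono, intro impI)
    fix m
    assume home: "int d dvd int y - int x - int m * int a \<longrightarrow> bpow n A m x y"
      and "int d dvd int v - int u - int (m + (j + k)) * int a"
    then have "int d dvd (int v - int u - int (m + (j + k)) * int a) + int j * int (a + b)"
      using int_d_dvd_a_plus_b by (intro dvd_add dvd_mult) auto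
    also have "\<dots> = int y - int x - int m * int a"
      using x(2) y(2) by (simp add: algebra_simps)
    finally have "bpow n A (j + m + k) u v"
      using home bpow_append x(3) up by blast
    then show "bpow n A (m + (j + k)) u v"
      by (simp add: ac_simps)
  qed
  then show ?thesis
    using eventually_sequentially_seg[of
      "\<lambda>m. int d dvd int v - int u - int m * int a \<longrightarrow> bpow n A m u v" "j + k"]
    by simp
qed

lemma bpow_eventually_iff:
  "\<forall>\<^sub>F m in sequentially. \<forall>u v.
     bpow n A m u v \<longleftrightarrow> u \<in> {1..n} \<and> v \<in> {1..n} \<and> int d dvd int v - int u - int m * int a"
proof -
  have "\<forall>\<^sub>F m in sequentially. \<forall>u\<in>{1..n}. \<forall>v\<in>{1..n}.
      int d dvd int v - int u - int m * int a \<longrightarrow> bpow n A m u v"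
    by (simp add: eventually_ball_finite_distrib bpow_eventually)
  then show ?thesis
    by (rule eventually_mono) (use bpow_dvd bpow_support[OF toeplitz_support] in blast)
qed

lemma comp_mat_eventually:
  "\<forall>\<^sub>F m in sequentially.
     comp_mat n A m = (\<lambda>u v. u \<in> {1..n} \<and> v \<in> {1..n} \<and> int d dvd int u - int v)"
  using bpow_eventually_iff
proof (rule eventually_mono)
  fix m
  assume m: "\<forall>u v. bpow n A m u v \<longleftrightarrow>
    u \<in> {1..n} \<and> v \<in> {1..n} \<and> int d dvd int v - int u - int m * int a"
  show "comp_mat n A m = (\<lambda>u v. u \<in> {1..n} \<and> v \<in> {1..n} \<and> int d dvd int u - int v)"
  proof (intro ext iffI)
    fix u v
    assume "comp_mat n A m u v"
    then obtain w where "bpow n A m u w" "bpow n A m v w"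
      using comp_mat_iff[OF toeplitz_support] by blast
    then have uv: "u \<in> {1..n}" "v \<in> {1..n}"
      and wv: "int d dvd int w - int v - int m * int a"
      and wu: "int d dvd int w - int u - int m * int a"
      using m by auto
    from wv wu have "int d dvd (int w - int v - int m * int a) - (int w - int u - int m * int a)"
      by (rule dvd_diff)
    then show "u \<in> {1..n} \<and> v \<in> {1..n} \<and> int d dvd int u - int v"
      using uv by simp
  next
    fix u v
    assume uv: "u \<in> {1..n} \<and> v \<in> {1..n} \<and> int d dvd int u - int v"
    obtain w where w: "w \<in> {1..d}" "int d dvd int w - (int u + int m * int a)"
      using ex_residue_rep[OF d_pos] by blast
    have "int d dvd (int w - (int u + int m * int a)) + (int u - int v)"
      using w(2) uv by (intro dvd_add) auto
    then have "bpow n A m u w" "bpow n A m v w"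
      using m uv w d_le_n by (auto simp: algebra_simps)
    then show "comp_mat n A m u v"
      using comp_mat_iff[OF toeplitz_support] w(1) d_le_n by auto
  qed
qed

lemma matrix_period_toeplitz: "matrix_period n A = d div gcd d a"
proof -
  obtain M where "\<forall>m\<ge>M. \<forall>u v.
      bpow n A m u v \<longleftrightarrow> u \<in> {1..n} \<and> v \<in> {1..n} \<and> int d dvd int v - int u - int m * int a"
    using bpow_eventually_iff unfolding eventually_sequentially by (elim exE) (rule that)
  then have M: "\<And>m u v. m \<ge> M \<Longrightarrow>
      bpow n A m u v \<longleftrightarrow> u \<in> {1..n} \<and> v \<in> {1..n} \<and> int d dvd int v - int u - int m * int a"
    by blast
  have "bpow n A m = bpow n A (m + q) \<longleftrightarrow> d dvd q * a" if "m \<ge> M" for m q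
  proof
    assume shift: "bpow n A m = bpow n A (m + q)"
    obtain w where w: "w \<in> {1..d}" "int d dvd int w - (1 + int m * int a)"
      using ex_residue_rep[OF d_pos] by blast
    then have "bpow n A m 1 w"
      using M[OF that] d_pos d_le_n by (auto simp: algebra_simps)
    then have "int d dvd int w - 1 - int (m + q) * int a"
      using M[of "m + q"] that shift by simp
    with w(2) have "int d dvd (int w - (1 + int m * int a)) - (int w - 1 - int (m + q) * int a)"
      by (rule dvd_diff)
    then have "int d dvd int (q * a)"
      by (simp add: algebra_simps)
    then show "d dvd q * a"
      by (simp only: of_nat_dvd_iff)
  next
    assume "d dvd q * a"
    then have "int d dvd int (q * a)"
      by (simp only: of_nat_dvd_iff)
    then have qa: "int d dvd int q * int a"
      by (simp only: of_nat_mult)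
    have "int v - int u - int (m + q) * int a = (int v - int u - int m * int a) - int q * int a"
      for u v
      by (simp add: algebra_simps)
    then have "int d dvd int v - int u - int (m + q) * int a \<longleftrightarrow> int d dvd int v - int u - int m * int a"
      for u v
      using dvd_diff_left_iff[OF qa] by (simp only:)
    then show "bpow n A m = bpow n A (m + q)"
      using M that by (auto intro!: ext)
  qed
  moreover have "gcd d a \<le> d" "0 < gcd d a"
    using d_pos a_pos by (simp_all add: dvd_imp_le)
  then have "d div gcd d a \<ge> 1"
    by (simp add: div_greater_zero_iff Suc_le_eq)
  ultimately show ?thesis
    using dvd_mult_iff_div_gcd_dvd[OF d_pos] by (intro matrix_period_eqI) auto
qed

lemma competition_period_toeplitz: "competition_period n A = 1"
proof -
  obtain M where "\<And>m. m \<ge> M \<Longrightarrow>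
      comp_mat n A m = (\<lambda>u v. u \<in> {1..n} \<and> v \<in> {1..n} \<and> int d dvd int u - int v)"
    using comp_mat_eventually unfolding eventually_sequentially by blast
  then show ?thesis
    by (rule competition_period_eq_1I)
qed

lemma mstep_comp_graph_eventually:
  "\<exists>M. \<forall>m\<ge>M. \<forall>u v. mstep_comp_graph n A m u v \<longleftrightarrow>
     u \<in> {1..n} \<and> v \<in> {1..n} \<and> u \<noteq> v \<and> u mod d = v mod d"
proof -
  have mod_iff: "u mod d = v mod d \<longleftrightarrow> int d dvd int u - int v" for u v
  proof -
    have "u mod d = v mod d \<longleftrightarrow> int (u mod d) = int (v mod d)"
      by (rule of_nat_eq_iff[symmetric])
    also have "\<dots> \<longleftrightarrow> int u mod int d = int v mod int d"
      by (simp only: zmod_int)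
    also have "\<dots> \<longleftrightarrow> int d dvd int u - int v"
      by (rule mod_eq_dvd_iff)
    finally show ?thesis .
  qed
  have "\<forall>\<^sub>F m in sequentially. \<forall>u v. mstep_comp_graph n A m u v \<longleftrightarrow>
     u \<in> {1..n} \<and> v \<in> {1..n} \<and> u \<noteq> v \<and> u mod d = v mod d"
    using comp_mat_eventually
  proof (rule eventually_mono, intro allI)
    fix m u v
    assume "comp_mat n A m = (\<lambda>u v. u \<in> {1..n} \<and> v \<in> {1..n} \<and> int d dvd int u - int v)"
    moreover have "mstep_comp_graph n A m u v \<longleftrightarrow>
        u \<in> {1..n} \<and> v \<in> {1..n} \<and> u \<noteq> v \<and> comp_mat n A m u v"
      by (simp add: mstep_comp_graph_def comp_mat_iff[OF toeplitz_support])
    ultimately show "mstep_comp_graph n A m u v \<longleftrightarrow>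
        u \<in> {1..n} \<and> v \<in> {1..n} \<and> u \<noteq> v \<and> u mod d = v mod d"
      by (auto simp: mod_iff)
  qed
  then show ?thesis
    unfolding eventually_sequentially .
qed

end

theorem theoremA:
  fixes n :: nat and S T :: "nat set"
  assumes "n \<ge> 2"
    and "S \<noteq> {}" and "T \<noteq> {}"
    and "S \<subseteq> {1..n-1}" and "T \<subseteq> {1..n-1}"
    and "Max S + Min T \<le> n" and "Min S + Max T \<le> n"
  defines "d \<equiv> Gcd {s + t | s t. s \<in> S \<and> t \<in> T}"
  defines "d' \<equiv> gcd d (Min S)"
  shows "matrix_period n (toeplitz n S T) = d div d' \<and>
         competition_period n (toeplitz n S T) = 1 \<and>
         (\<exists>M. \<forall>m\<ge>M. \<forall>u v. mstep_comp_graph n (toeplitz n S T) m u v \<longleftrightarrow>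
           (u \<in> {1..n} \<and> v \<in> {1..n} \<and> u \<noteq> v \<and> u mod d = v mod d))"
proof -
  \<comment> \<open>\<open>n \<ge> 2\<close> is implied by \<open>S \<noteq> {}\<close> and \<open>S \<subseteq> {1..n-1}\<close>.\<close>
  interpret toeplitz_digraph n S T
    using assms(2-7) by unfold_locales
  show ?thesis
    unfolding d_def d'_def
    using matrix_period_toeplitz competition_period_toeplitz mstep_comp_graph_eventually by blast
qed

end
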